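(* Let $M_b=\langle S_b,A_b,T_b\rangle$ be the $b$-bounded MDP of a relational MDP $K=\langle\Sigma,\Delta\rangle$, $\phi$ a relational pCTL sentence, and $C=consts(\phi)\cup consts(\Delta)$. Let $s_1,s_2\in S_b$ with $s_1\sim_C s_2$ via the bijection $f:consts(s_1)\setminus C\to consts(s_2)\setminus C$ (extended by the identity on $C$). Then for every transition rule $H_i\xleftarrow{p_i:\alpha}B$ of $\Delta$, $s_1$ can fire the rule iff $s_2$ can: for every substitution $\theta_1$, $s_1\preceq_{\theta_1}B$ iff $s_2\preceq_{\theta_2}B$, where $\theta_2=f\circ\theta_1$ is the corresponding indistinguishable substitution.
   Context: Relational logic: terms are variables or constants; atoms $p(t_1,\dots,t_m)$; an abstract state is a finite set of atoms. Object identity assumption: distinct terms in a conjunction denote distinct objects. OI-subsumption: $A\preceq_\theta B$ iff $\theta$ is a substitution with $B\theta\subseteq A$ mapping distinct terms of $B$ to distinct terms. A Herbrand interpretation is a set of ground atoms; $\mathit{adom}(s)=consts(s)$. Relational MDP $K=\langle\Sigma,\Delta\rangle$, $\Sigma=\langle R,D\rangle$ ($R$ finite relation symbols, $D$ possibly infinite constants); $\Delta$ a finite set of abstract transitions, each a set of rules $\{H_1\xleftarrow{p_1:\alpha}B,\dots,H_n\xleftarrow{p_n:\alpha}B\}$ with abstract states $H_i,B$, $\sum_ip_i=1$, $vars(H_i)\subseteq vars(B)$. The underlying ground MDP has Herbrand interpretations as states; from $s$, for each $\theta$ with $s\preceq_\theta B$, action $\alpha\theta$ leads to $(s\setminus B\theta)\cup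 H_i\theta$ with probability $p_i$. The $b$-bounded MDP $M_b$ restricts to states $s$ with $|\mathit{adom}(s)|\le b$ and transitions between such states. Indistinguishability: for $s_1,s_2\in S_b$ with $C_1=consts(s_1)$, $C_2=consts(s_2)$ and $C\subseteq C_1\cap C_2$, $s_1\sim_C s_2$ iff there is a bijection $f:C_1\setminus C\to C_2\setminus C$ such that renaming the constants of $s_1$ by $f$ (and fixing $C$) yields $s_2$, i.e. $f(s_1)=s_2$. *)

theory Defs
  imports Complex_Main
begin

datatype ('v, 'c) rterm = Var 'v | Const 'c

type_synonym ('p, 'v, 'c) ratom = "'p \<times> ('v, 'c) rterm list"

definition terms :: "('p, 'v, 'c) ratom set \<Rightarrow> ('v, 'c) rterm set" where
  "terms A = (\<Union>a\<in>A. set (snd a))"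

definition consts_of :: "('p, 'v, 'c) ratom set \<Rightarrow> 'c set" where
  "consts_of A = {c. Const c \<in> terms A}"

definition vars_of :: "('p, 'v, 'c) ratom set \<Rightarrow> 'v set" where
  "vars_of A = {x. Var x \<in> terms A}"

definition ground :: "('p, 'v, 'c) ratom set \<Rightarrow> bool" where
  "ground A \<longleftrightarrow> vars_of A = {}"

definition adom :: "('p, 'v, 'c) ratom set \<Rightarrow> 'c set" where
  "adom s = consts_of s"

type_synonym ('v, 'c) subst = "'v \<Rightarrow> ('v, 'c) rterm"

fun subst_term :: "('v, 'c) subst \<Rightarrow> ('v, 'c) rterm \<Rightarrow> ('v, 'c) rterm" where
  "subst_term \<theta> (Var x) = \<theta> x"
| "subst_term \<theta> (Const c) = Const c"

definition subst_atom :: "('v, 'c) subst \<Rightarrow> ('p, 'v, 'c) ratom \<Rightarrow> ('p, 'v, 'c) ratom" where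
  "subst_atom \<theta> a = (fst a, map (subst_term \<theta>) (snd a))"

definition subst_set :: "('p, 'v, 'c) ratom set \<Rightarrow> ('v, 'c) subst \<Rightarrow> ('p, 'v, 'c) ratom set" where
  "subst_set B \<theta> = subst_atom \<theta> ` B"

definition oi_subsumes :: "('p, 'v, 'c) ratom set \<Rightarrow> ('v, 'c) subst \<Rightarrow> ('p, 'v, 'c) ratom set \<Rightarrow> bool" where
  "oi_subsumes A \<theta> B \<longleftrightarrow> subst_set B \<theta> \<subseteq> A \<and> inj_on (subst_term \<theta>) (terms B)"

fun rename_term :: "('c \<Rightarrow> 'c) \<Rightarrow> ('v, 'c) rterm \<Rightarrow> ('v, 'c) rterm" where
  "rename_term g (Var x) = Var x"
| "rename_term g (Const c) = Const (g c)"

definition rename_set :: "('c \<Rightarrow> 'c) \<Rightarrow> ('p, 'v, 'c) ratom set \<Rightarrow> ('p, 'v, 'c) ratom set" where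
  "rename_set g s = (\<lambda>a. (fst a, map (rename_term g) (snd a))) ` s"

definition ext_id :: "'c set \<Rightarrow> ('c \<Rightarrow> 'c) \<Rightarrow> 'c \<Rightarrow> 'c" where
  "ext_id C f c = (if c \<in> C then c else f c)"

type_synonym ('p, 'a, 'v, 'c) rule =
  "('p, 'v, 'c) ratom set \<times> real \<times> ('a, 'v, 'c) ratom \<times> ('p, 'v, 'c) ratom set"

definition rhead :: "('p, 'a, 'v, 'c) rule \<Rightarrow> ('p, 'v, 'c) ratom set" where
  "rhead r = fst r"
definition rprob :: "('p, 'a, 'v, 'c) rule \<Rightarrow> real" where
  "rprob r = fst (snd r)"
definition raction :: "('p, 'a, 'v, 'c) rule \<Rightarrow> ('a, 'v, 'c) ratom" where
  "raction r = fst (snd (snd r))"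
definition rbody :: "('p, 'a, 'v, 'c) rule \<Rightarrow> ('p, 'v, 'c) ratom set" where
  "rbody r = snd (snd (snd r))"

record ('p, 'a, 'v, 'c) rmdp =
  rels :: "'p set"
  arity :: "'p \<Rightarrow> nat"
  dom :: "'c set"
  trans :: "('p, 'a, 'v, 'c) rule set set"

definition wf_atom :: "('p, 'a, 'v, 'c) rmdp \<Rightarrow> ('p, 'v, 'c) ratom \<Rightarrow> bool" where
  "wf_atom K a \<longleftrightarrow> fst a \<in> rels K \<and> length (snd a) = arity K (fst a)
     \<and> (\<forall>c. Const c \<in> set (snd a) \<longrightarrow> c \<in> dom K)"

definition wf_rmdp :: "('p, 'a, 'v, 'c) rmdp \<Rightarrow> bool" where
  "wf_rmdp K \<longleftrightarrow> finite (rels K) \<and> finite (trans K) \<and>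
     (\<forall>T\<in>trans K. finite T \<and> T \<noteq> {} \<and>
        (\<exists>\<alpha> B. \<forall>r\<in>T. raction r = \<alpha> \<and> rbody r = B) \<and>
        (\<Sum>r\<in>T. rprob r) = 1 \<and>
        (\<forall>r\<in>T. 0 \<le> rprob r \<and> finite (rhead r) \<and> finite (rbody r)
           \<and> (\<forall>a\<in>rhead r. wf_atom K a) \<and> (\<forall>a\<in>rbody r. wf_atom K a)
           \<and> (\<forall>c. Const c \<in> set (snd (raction r)) \<longrightarrow> c \<in> dom K)
           \<and> vars_of (rhead r) \<subseteq> vars_of (rbody r)))"

definition consts_trans :: "('p, 'a, 'v, 'c) rmdp \<Rightarrow> 'c set" where
  "consts_trans K = (\<Union>T\<in>trans K. \<Union>r\<in>T.
      consts_of (rhead r) \<union> consts_of (rbody r) \<union> {c. Const c \<in> set (snd (raction r))})"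

definition herbrand :: "('p, 'a, 'v, 'c) rmdp \<Rightarrow> ('p, 'v, 'c) ratom set \<Rightarrow> bool" where
  "herbrand K s \<longleftrightarrow> ground s \<and> (\<forall>a\<in>s. wf_atom K a)"

definition bstates :: "('p, 'a, 'v, 'c) rmdp \<Rightarrow> nat \<Rightarrow> ('p, 'v, 'c) ratom set set" where
  "bstates K b = {s. herbrand K s \<and> finite (adom s) \<and> card (adom s) \<le> b}"

definition indist_via :: "'c set \<Rightarrow> ('c \<Rightarrow> 'c) \<Rightarrow> ('p, 'v, 'c) ratom set \<Rightarrow> ('p, 'v, 'c) ratom set \<Rightarrow> bool" where
  "indist_via C f s1 s2 \<longleftrightarrow> C \<subseteq> consts_of s1 \<inter> consts_of s2 \<and>
     bij_betw f (consts_of s1 - C) (consts_of s2 - C) \<and>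
     rename_set (ext_id C f) s1 = s2"

end

theory Submission
  imports Defs
begin

text \<open>Renaming constants by a map g that is injective on a set X and fixes every constant of
  a body B commutes with instantiating B, and it is injective on atoms and terms whose constants
  lie in X. So, with g the extension of f by the identity on C \<supseteq> consts(\<Delta>) and X = consts(s1),
  B\<theta>1 \<subseteq> s1 iff g(B\<theta>1) \<subseteq> g(s1) = s2, and \<theta>1 is injective on the terms of B iff g \<circ> \<theta>1 is.
  The hypothesis that \<theta>1 maps into consts(s1) is what keeps B\<theta>1 inside X.\<close>

definition terms_over :: "'c set \<Rightarrow> ('v, 'c) rterm set" where
  "terms_over X = range Var \<union> Const ` X"

definition rename_atom :: "('c \<Rightarrow> 'c) \<Rightarrow> ('p, 'v, 'c) ratom \<Rightarrow> ('p, 'v, 'c) ratom" where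
  "rename_atom g a = (fst a, map (rename_term g) (snd a))"

lemma rename_set_eq_image: "rename_set g s = rename_atom g ` s"
  by (simp add: rename_set_def rename_atom_def)

lemma terms_subset_terms_over_iff:
  fixes A :: "('p, 'v, 'c) ratom set"
  shows "terms A \<subseteq> terms_over X \<longleftrightarrow> consts_of A \<subseteq> X"
proof -
  have "t \<in> terms_over X \<longleftrightarrow> (\<forall>c. t = Const c \<longrightarrow> c \<in> X)" for t :: "('v, 'c) rterm"
    by (cases t) (auto simp: terms_over_def)
  then show ?thesis
    by (auto simp: consts_of_def)
qed

lemma terms_subst_set: "terms (subst_set B \<theta>) = subst_term \<theta> ` terms B"
  by (auto simp: terms_def subst_set_def subst_atom_def)

lemma consts_of_subst_set_subset:
  assumes "consts_of B \<subseteq> X" and "\<forall>x\<in>vars_of B. \<theta> x \<in> terms_over X"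
  shows "consts_of (subst_set B \<theta>) \<subseteq> X"
proof -
  have "subst_term \<theta> t \<in> terms_over X" if "t \<in> terms B" for t
    using that assms by (cases t) (auto simp: terms_over_def consts_of_def vars_of_def)
  then show ?thesis
    by (auto simp: terms_subst_set simp flip: terms_subset_terms_over_iff)
qed

lemma inj_on_ext_id:
  assumes "bij_betw f (A - C) (B - C)"
  shows "inj_on (ext_id C f) A"
proof (rule inj_onI)
  fix x y assume "x \<in> A" "y \<in> A" and eq: "ext_id C f x = ext_id C f y"
  have outside_C: "f z \<notin> C" if "z \<in> A - C" for z
    using that assms by (auto dest: bij_betwE)
  have "inj_on f (A - C)"
    using assms by (rule bij_betw_imp_inj_on)
  then show "x = y"
    using \<open>x \<in> A\<close> \<open>y \<in> A\<close> eq outside_C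
    by (cases "x \<in> C"; cases "y \<in> C") (auto simp: ext_id_def dest: inj_onD)
qed

lemma inj_on_rename_term:
  assumes "inj_on g X"
  shows "inj_on (rename_term g) (terms_over X)"
proof (rule inj_onI)
  fix s t assume "s \<in> terms_over X" "t \<in> terms_over X" "rename_term g s = rename_term g t"
  with assms show "s = t"
    by (cases s; cases t) (auto simp: terms_over_def dest: inj_onD)
qed

lemma inj_on_rename_atom:
  assumes "inj_on g X"
  shows "inj_on (rename_atom g) (UNIV \<times> lists (terms_over X))"
proof (rule inj_onI)
  fix a a' assume "a \<in> UNIV \<times> lists (terms_over X)" "a' \<in> UNIV \<times> lists (terms_over X)"
    and "rename_atom g a = rename_atom g a'"
  with inj_on_map_lists[OF inj_on_rename_term[OF assms]] show "a = a'"
    by (auto simp: rename_atom_def prod_eq_iff dest: inj_onD)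
qed

lemma atoms_subset_lists_terms_over:
  assumes "consts_of A \<subseteq> X"
  shows "A \<subseteq> UNIV \<times> lists (terms_over X)"
  using assms by (fastforce simp: terms_def simp flip: terms_subset_terms_over_iff)

lemma subst_term_rename_comm:
  assumes "\<And>c. t = Const c \<Longrightarrow> g c = c"
  shows "subst_term (rename_term g \<circ> \<theta>) t = rename_term g (subst_term \<theta> t)"
  using assms by (cases t) auto

lemma subst_set_rename_comm:
  assumes "\<forall>c\<in>consts_of B. g c = c"
  shows "subst_set B (rename_term g \<circ> \<theta>) = rename_set g (subst_set B \<theta>)"
proof -
  have "subst_atom (rename_term g \<circ> \<theta>) a = rename_atom g (subst_atom \<theta> a)" if "a \<in> B" for a
  proof -
    have "t \<in> terms B" if "t \<in> set (snd a)" for t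
      using \<open>a \<in> B\<close> that by (auto simp: terms_def)
    then show ?thesis
      using assms by (auto simp: subst_atom_def rename_atom_def consts_of_def
          intro!: subst_term_rename_comm)
  qed
  then show ?thesis
    by (auto simp: subst_set_def rename_set_eq_image image_image)
qed

lemma oi_subsumes_rename_iff:
  assumes inj: "inj_on g X"
    and A: "consts_of A \<subseteq> X" and B\<theta>: "consts_of (subst_set B \<theta>) \<subseteq> X"
    and fixes_B: "\<forall>c\<in>consts_of B. g c = c"
  shows "oi_subsumes (rename_set g A) (rename_term g \<circ> \<theta>) B \<longleftrightarrow> oi_subsumes A \<theta> B"
proof -
  have "subst_set B (rename_term g \<circ> \<theta>) \<subseteq> rename_set g A \<longleftrightarrow> subst_set B \<theta> \<subseteq> A"
    using inj_on_image_mem_iff[OF inj_on_rename_atom[OF inj]]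
      atoms_subset_lists_terms_over[OF A] atoms_subset_lists_terms_over[OF B\<theta>]
    unfolding subst_set_rename_comm[OF fixes_B] rename_set_eq_image image_subset_iff
    by blast
  moreover have "inj_on (subst_term (rename_term g \<circ> \<theta>)) (terms B)
      \<longleftrightarrow> inj_on (subst_term \<theta>) (terms B)"
  proof -
    have "subst_term (rename_term g \<circ> \<theta>) t = (rename_term g \<circ> subst_term \<theta>) t"
      if "t \<in> terms B" for t
      using that fixes_B by (auto simp: consts_of_def intro: subst_term_rename_comm)
    then have "inj_on (subst_term (rename_term g \<circ> \<theta>)) (terms B)
        \<longleftrightarrow> inj_on (rename_term g \<circ> subst_term \<theta>) (terms B)"
      by (rule inj_on_cong)
    moreover have "inj_on (rename_term g) (subst_term \<theta> ` terms B)"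
      using inj_on_subset[OF inj_on_rename_term[OF inj]] B\<theta>
      by (simp flip: terms_subst_set terms_subset_terms_over_iff)
    ultimately show ?thesis
      by (meson comp_inj_on inj_on_imageI2)
  qed
  ultimately show ?thesis
    by (simp add: oi_subsumes_def)
qed

theorem proposition1:
  fixes K :: "('p, 'a, 'v, 'c) rmdp" and b :: nat
    and Cphi :: "'c set" and C :: "'c set"
    and s1 s2 :: "('p, 'v, 'c) ratom set" and f :: "'c \<Rightarrow> 'c"
  assumes "wf_rmdp K"
    and "finite Cphi" and "Cphi \<subseteq> dom K"
    and "C = Cphi \<union> consts_trans K"
    and "s1 \<in> bstates K b" and "s2 \<in> bstates K b"
    and "indist_via C f s1 s2"
  shows "\<forall>T\<in>trans K. \<forall>r\<in>T. \<forall>\<theta>1 :: ('v, 'c) subst.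
           (\<forall>x\<in>vars_of (rbody r). \<theta>1 x \<in> Const ` consts_of s1) \<longrightarrow>
           (oi_subsumes s1 \<theta>1 (rbody r) \<longleftrightarrow>
            oi_subsumes s2 (\<lambda>x. rename_term (ext_id C f) (\<theta>1 x)) (rbody r))"
proof (intro ballI allI impI)
  fix T r and \<theta>1 :: "('v, 'c) subst"
  assume "T \<in> trans K" "r \<in> T"
    and \<theta>1: "\<forall>x\<in>vars_of (rbody r). \<theta>1 x \<in> Const ` consts_of s1"
  have C_sub: "C \<subseteq> consts_of s1" and s2: "s2 = rename_set (ext_id C f) s1"
    and bij: "bij_betw f (consts_of s1 - C) (consts_of s2 - C)"
    using assms(7) by (auto simp: indist_via_def)
  have body: "consts_of (rbody r) \<subseteq> C"
    using \<open>T \<in> trans K\<close> \<open>r \<in> T\<close> assms(4) by (auto simp: consts_trans_def)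
  have "consts_of (subst_set (rbody r) \<theta>1) \<subseteq> consts_of s1"
    using body C_sub \<theta>1 by (intro consts_of_subst_set_subset) (auto simp: terms_over_def)
  moreover have "\<forall>c\<in>consts_of (rbody r). ext_id C f c = c"
    using body by (auto simp: ext_id_def)
  ultimately show "oi_subsumes s1 \<theta>1 (rbody r) \<longleftrightarrow>
      oi_subsumes s2 (\<lambda>x. rename_term (ext_id C f) (\<theta>1 x)) (rbody r)"
    using oi_subsumes_rename_iff[OF inj_on_ext_id[OF bij] order_refl] s2
    by (simp add: comp_def)
qed

end
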